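(* Consider the decentralized Thompson Sampling algorithm for Bernoulli rewards described in the context, with learning rate $\eta>0$ and prior $\mathrm{Beta}(1,1)$. Then for every round $t\ge1$, agent $i\in[N]$ and arm $k\in[K]$, the distribution $Q^{(i)}_{k,t}$ (with density $q^{(i)}_{k,t}$) from which $\theta^{(i)}_k(t)$ is sampled is $\mathrm{Beta}(\alpha^{(i)}_k(t),\beta^{(i)}_k(t))$, where \[ \alpha^{(i)}_k(t)=\eta\sum_{\tau=1}^{t-1}\sum_{j=1}^N W^{t-\tau}_{ij}Y^{(j)}_{\tau}\mathbf 1\{A^{(j)}_\tau=k\}+1,\qquad \beta^{(i)}_k(t)=\eta\sum_{\tau=1}^{t-1}\sum_{j=1}^N W^{t-\tau}_{ij}(1-Y^{(j)}_{\tau})\mathbf 1\{A^{(j)}_\tau=k\}+1, \] and $W^{s}_{ij}$ denotes the $(i,j)$ entry of the matrix power $W^s$.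
   Context: $N$ agents on a connected undirected graph; $W\in\mathbb R^{N\times N}$ doubly stochastic with nonnegative entries, $W_{ij}>0$ for $i\ne j$ iff $\{i,j\}$ is an edge. $K$ arms with Bernoulli rewards (arm $k$ has mean $\mu_k$), independent across agents, rounds, arms. Let $p_\theta(y)=\theta^y(1-\theta)^{1-y}$ on $[0,1]$. Decentralized Thompson Sampling (learning rate $\eta$, prior density $q_0$ on $[0,1]$): agent $i$ maintains densities $q^{(i)}_{k,t}$ with $q^{(i)}_{k,1}=q_0$. In round $t$, agent $i$ draws $\theta^{(i)}_k(t)\sim q^{(i)}_{k,t}$ independently over $k$, plays $A^{(i)}_t\in\arg\max_k\theta^{(i)}_k(t)$, observes reward $Y^{(i)}_t$, forms $\tilde q^{(i)}_{k,t+1}(\theta)\propto q^{(i)}_{k,t}(\theta)p_\theta(Y^{(i)}_t)^\eta$ (normalized on $[0,1]$) for $k=A^{(i)}_t$ and $\tilde q^{(i)}_{k,t+1}=q^{(i)}_{k,t}$ otherwise, and after communication sets $q^{(i)}_{k,t+1}(\theta)=\frac{\exp(\sum_{j}W_{ij}\log\tilde q^{(j)}_{k,t+1}(\theta))}{\int_0^1\exp(\sum_jW_{ij}\log\tilde q^{(j)}_{k,t+1}(\phi))d\phi}$. *)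

theory Defs
  imports "HOL-Analysis.Analysis"
begin

text \<open>Agents are 0..<N, arms 0..<K, rounds are t = 1,2,...  Row/column indices of W are agents.\<close>

fun mat_pow :: "nat \<Rightarrow> (nat \<Rightarrow> nat \<Rightarrow> real) \<Rightarrow> nat \<Rightarrow> nat \<Rightarrow> nat \<Rightarrow> real" where
  "mat_pow N W 0 i j = (if i = j then 1 else 0)"
| "mat_pow N W (Suc s) i j = (\<Sum>l<N. mat_pow N W s i l * W l j)"

definition gossip_matrix :: "nat \<Rightarrow> (nat \<Rightarrow> nat \<Rightarrow> real) \<Rightarrow> bool" where
  "gossip_matrix N W \<longleftrightarrow>
     (\<forall>i<N. \<forall>j<N. W i j \<ge> 0) \<and>
     (\<forall>i<N. (\<Sum>j<N. W i j) = 1) \<and>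
     (\<forall>j<N. (\<Sum>i<N. W i j) = 1) \<and>
     (\<forall>i<N. \<forall>j<N. (W i j > 0) = (W j i > 0)) \<and>
     (\<forall>i<N. \<forall>j<N. (i, j) \<in> ({(a, b). a < N \<and> b < N \<and> a \<noteq> b \<and> W a b > 0})\<^sup>*)"

definition bern_lik :: "real \<Rightarrow> real \<Rightarrow> real" where
  "bern_lik \<theta> y = \<theta> powr y * (1 - \<theta>) powr (1 - y)"

definition beta_density :: "real \<Rightarrow> real \<Rightarrow> real \<Rightarrow> real" where
  "beta_density a b \<theta> =
     (if 0 < \<theta> \<and> \<theta> < 1 then \<theta> powr (a - 1) * (1 - \<theta>) powr (b - 1) / Beta a b else 0)"

definition normalize01 :: "(real \<Rightarrow> real) \<Rightarrow> real \<Rightarrow> real" where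
  "normalize01 f \<theta> = f \<theta> / integral {0..1} f"

text \<open>Given the realised actions A t j (arm played by agent j in
  round t) and rewards Y t j, dts_q N W A Y \<eta> q0 n i k is the density q^{(i)}_{k,n+1}
  (index shift: n = 0 is round 1).\<close>
fun dts_q :: "nat \<Rightarrow> (nat \<Rightarrow> nat \<Rightarrow> real) \<Rightarrow> (nat \<Rightarrow> nat \<Rightarrow> nat) \<Rightarrow> (nat \<Rightarrow> nat \<Rightarrow> real)
              \<Rightarrow> real \<Rightarrow> (real \<Rightarrow> real) \<Rightarrow> nat \<Rightarrow> nat \<Rightarrow> nat \<Rightarrow> real \<Rightarrow> real" where
  "dts_q N W A Y \<eta> q0 0 i k = q0"
| "dts_q N W A Y \<eta> q0 (Suc n) i k =
     (let qt = (\<lambda>j. if A (Suc n) j = k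
                     then normalize01 (\<lambda>\<theta>. dts_q N W A Y \<eta> q0 n j k \<theta> * bern_lik \<theta> (Y (Suc n) j) powr \<eta>)
                     else dts_q N W A Y \<eta> q0 n j k)
      in normalize01 (\<lambda>\<theta>. exp (\<Sum>j<N. W i j * ln (qt j \<theta>))))"

definition dts_density where
  "dts_density N W A Y \<eta> q0 t i k = dts_q N W A Y \<eta> q0 (t - 1) i k"

end

theory Submission imports Defs begin

text \<open>Beta densities are closed under both steps of the algorithm.  Multiplying by the tempered
  likelihood \<open>p\<^sub>\<theta>(y)\<^sup>\<eta>\<close> adds \<open>\<eta> y\<close> and \<open>\<eta> (1 - y)\<close> to the two parameters (conjugacy).  Since
  \<open>ln q\<close> of a Beta density is affine in its parameters up to the normalising constant, the
  normalised geometric mean \<open>exp (\<Sum>\<^sub>j W\<^sub>i\<^sub>j ln q\<^sub>j)\<close> of Beta densities, with weights summing to 1, is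
  the Beta density with the \<open>W\<^sub>i\<^sub>j\<close>-averaged parameters.  By induction on the round every density is
  therefore Beta, and its parameters obey \<open>\<alpha>\<^sub>i(t+1) = \<Sum>\<^sub>j W\<^sub>i\<^sub>j (\<alpha>\<^sub>j(t) + \<eta> Y\<^sub>j\<^sub>t 1{A\<^sub>j\<^sub>t = k})\<close>;
  unrolling this recursion produces the matrix powers.\<close>

lemma Beta_real_pos: "a > 0 \<Longrightarrow> b > 0 \<Longrightarrow> Beta a b > (0::real)"
  unfolding Beta_def by (simp add: Gamma_real_pos_exp)

lemma ln_beta_density:
  assumes "a > 0" "b > 0" "0 < x" "x < 1"
  shows "ln (beta_density a b x) = (a - 1) * ln x + (b - 1) * ln (1 - x) - ln (Beta a b)"
  using assms Beta_real_pos[of a b] unfolding beta_density_def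
  by (simp add: ln_mult ln_div ln_powr)

lemma normalize01_eq_beta_density:
  fixes f :: "real \<Rightarrow> real"
  assumes "a > 0" "b > 0" "c > 0"
    and f: "\<And>x. 0 < x \<Longrightarrow> x < 1 \<Longrightarrow> f x = c * (x powr (a - 1) * (1 - x) powr (b - 1))"
    and "0 < \<theta>" "\<theta> < 1"
  shows "normalize01 f \<theta> = beta_density a b \<theta>"
proof -
  have "((\<lambda>x. c * (x powr (a - 1) * (1 - x) powr (b - 1))) has_integral c * Beta a b) {0<..<1}"
    using has_integral_mult_right[OF has_integral_Beta_real[OF \<open>a > 0\<close> \<open>b > 0\<close>]]
    by (simp add: has_integral_Icc_iff_Ioo)
  then have "(f has_integral c * Beta a b) {0<..<1}"
    by (rule has_integral_eq[rotated]) (simp add: f)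
  then have "(f has_integral c * Beta a b) {0..1}"
    by (simp add: has_integral_Icc_iff_Ioo)
  then have "integral {0..1} f = c * Beta a b"
    by (rule integral_unique)
  then show ?thesis
    using assms unfolding normalize01_def beta_density_def by simp
qed

lemma normalize01_bern_lik_beta_density:
  assumes "a > 0" "b > 0" "a + \<eta> * y > 0" "b + \<eta> * (1 - y) > 0"
    and q: "\<And>x. 0 < x \<Longrightarrow> x < 1 \<Longrightarrow> q x = beta_density a b x"
    and "0 < \<theta>" "\<theta> < 1"
  shows "normalize01 (\<lambda>x. q x * bern_lik x y powr \<eta>) \<theta> =
         beta_density (a + \<eta> * y) (b + \<eta> * (1 - y)) \<theta>"
proof (rule normalize01_eq_beta_density[where c = "1 / Beta a b"])
  fix x :: real assume x: "0 < x" "x < 1"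
  then show "q x * bern_lik x y powr \<eta> =
        1 / Beta a b * (x powr (a + \<eta> * y - 1) * (1 - x) powr (b + \<eta> * (1 - y) - 1))"
    by (simp add: q beta_density_def bern_lik_def powr_mult powr_powr powr_add[symmetric]
        algebra_simps)
qed (use assms Beta_real_pos[of a b] in auto)

lemma dts_local_update_beta_density:
  assumes "a > 0" "b > 0" "\<eta> \<ge> 0" "0 \<le> y" "y \<le> 1"
    and q: "\<And>x. 0 < x \<Longrightarrow> x < 1 \<Longrightarrow> q x = beta_density a b x"
    and "0 < \<theta>" "\<theta> < 1"
  shows "(if played then normalize01 (\<lambda>x. q x * bern_lik x y powr \<eta>) else q) \<theta> =
         beta_density (a + \<eta> * y * of_bool played) (b + \<eta> * (1 - y) * of_bool played) \<theta>"
proof (cases played)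
  case True
  have "a + \<eta> * y > 0" "b + \<eta> * (1 - y) > 0"
    using assms by (simp_all add: add_pos_nonneg)
  with True show ?thesis
    using assms by (simp add: normalize01_bern_lik_beta_density)
qed (use assms in simp)

lemma normalize01_geometric_pool_beta_density:
  fixes w a b :: "'j \<Rightarrow> real"
  assumes "finite S" "sum w S = 1"
    and pos: "\<And>j. j \<in> S \<Longrightarrow> a j > 0 \<and> b j > 0"
    and "(\<Sum>j\<in>S. w j * a j) > 0" "(\<Sum>j\<in>S. w j * b j) > 0"
    and q: "\<And>j x. j \<in> S \<Longrightarrow> 0 < x \<Longrightarrow> x < 1 \<Longrightarrow> q j x = beta_density (a j) (b j) x"
    and "0 < \<theta>" "\<theta> < 1"
  shows "normalize01 (\<lambda>x. exp (\<Sum>j\<in>S. w j * ln (q j x))) \<theta> =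
         beta_density (\<Sum>j\<in>S. w j * a j) (\<Sum>j\<in>S. w j * b j) \<theta>"
proof (rule normalize01_eq_beta_density[where c = "exp (- (\<Sum>j\<in>S. w j * ln (Beta (a j) (b j))))"])
  fix x :: real assume x: "0 < x" "x < 1"
  have "(\<Sum>j\<in>S. w j * ln (q j x)) =
        (\<Sum>j\<in>S. (w j * a j) * ln x - w j * ln x + (w j * b j) * ln (1 - x) - w j * ln (1 - x)
                - w j * ln (Beta (a j) (b j)))"
    using pos q x by (intro sum.cong) (auto simp: ln_beta_density algebra_simps)
  also have "\<dots> = (\<Sum>j\<in>S. w j * a j) * ln x - sum w S * ln x
                  + (\<Sum>j\<in>S. w j * b j) * ln (1 - x) - sum w S * ln (1 - x)
                  - (\<Sum>j\<in>S. w j * ln (Beta (a j) (b j)))"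
    by (simp only: sum.distrib sum_subtractf sum_distrib_right)
  also have "\<dots> = ((\<Sum>j\<in>S. w j * a j) - 1) * ln x + ((\<Sum>j\<in>S. w j * b j) - 1) * ln (1 - x)
                  - (\<Sum>j\<in>S. w j * ln (Beta (a j) (b j)))"
    using \<open>sum w S = 1\<close> by (simp add: algebra_simps)
  finally show "exp (\<Sum>j\<in>S. w j * ln (q j x)) =
      exp (- (\<Sum>j\<in>S. w j * ln (Beta (a j) (b j)))) *
      (x powr ((\<Sum>j\<in>S. w j * a j) - 1) * (1 - x) powr ((\<Sum>j\<in>S. w j * b j) - 1))"
    using x by (simp add: powr_def exp_add exp_diff exp_minus divide_inverse mult.commute mult.left_commute)
qed (use assms in auto)

lemma mat_pow_1:
  assumes "i < N"
  shows "mat_pow N W (Suc 0) i j = W i j"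
  using assms by (simp add: of_bool_def[symmetric])

lemma mat_pow_Suc_left:
  assumes "i < N" "j < N"
  shows "mat_pow N W (Suc s) i j = (\<Sum>l<N. W i l * mat_pow N W s l j)"
  using assms(2)
proof (induction s arbitrary: j)
  case 0
  then show ?case
    using mat_pow_1[OF assms(1)] by (simp add: of_bool_def[symmetric])
next
  case (Suc s)
  have "mat_pow N W (Suc (Suc s)) i j = (\<Sum>m<N. \<Sum>l<N. W i l * mat_pow N W s l m * W m j)"
    using Suc.IH by (simp add: sum_distrib_right mult.assoc)
  also have "\<dots> = (\<Sum>l<N. W i l * mat_pow N W (Suc s) l j)"
    by (subst sum.swap) (simp add: sum_distrib_left mult.assoc)
  finally show ?case .
qed

lemma mat_pow_nonneg:
  assumes "\<And>i j. i < N \<Longrightarrow> j < N \<Longrightarrow> 0 \<le> W i j" "j < N"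
  shows "0 \<le> mat_pow N W s i j"
  using assms(2) by (induction s arbitrary: j) (auto intro!: sum_nonneg mult_nonneg_nonneg assms(1))

definition gossip_sum ::
    "nat \<Rightarrow> (nat \<Rightarrow> nat \<Rightarrow> real) \<Rightarrow> (nat \<Rightarrow> nat \<Rightarrow> real) \<Rightarrow> nat \<Rightarrow> nat \<Rightarrow> real" where
  "gossip_sum N W g n i = (\<Sum>\<tau>=1..n. \<Sum>j<N. mat_pow N W (Suc n - \<tau>) i j * g \<tau> j)"

lemma gossip_sum_0 [simp]: "gossip_sum N W g 0 i = 0"
  by (simp add: gossip_sum_def)

lemma gossip_sum_Suc:
  assumes "i < N"
  shows "gossip_sum N W g (Suc n) i = (\<Sum>j<N. W i j * (gossip_sum N W g n j + g (Suc n) j))"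
proof -
  have "gossip_sum N W g (Suc n) i =
        (\<Sum>\<tau>=1..n. \<Sum>j<N. mat_pow N W (Suc (Suc n - \<tau>)) i j * g \<tau> j)
        + (\<Sum>j<N. mat_pow N W (Suc 0) i j * g (Suc n) j)"
    unfolding gossip_sum_def by (simp add: Suc_diff_le del: mat_pow.simps)
  also have "\<dots> =
        (\<Sum>\<tau>=1..n. \<Sum>j<N. \<Sum>l<N. W i l * (mat_pow N W (Suc n - \<tau>) l j * g \<tau> j))
        + (\<Sum>j<N. W i j * g (Suc n) j)"
    using assms
    by (simp add: mat_pow_1 mat_pow_Suc_left sum_distrib_right mult.assoc of_bool_def[symmetric]
        del: mat_pow.simps(2))
  also have "(\<Sum>\<tau>=1..n. \<Sum>j<N. \<Sum>l<N. W i l * (mat_pow N W (Suc n - \<tau>) l j * g \<tau> j)) =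
             (\<Sum>l<N. W i l * gossip_sum N W g n l)"
    unfolding gossip_sum_def sum_distrib_left
    by (subst sum.swap, subst (2) sum.swap) (rule refl)
  finally show ?thesis
    by (simp add: distrib_left sum.distrib)
qed

lemma gossip_sum_nonneg:
  assumes "\<And>i j. i < N \<Longrightarrow> j < N \<Longrightarrow> 0 \<le> W i j"
    and "\<And>\<tau> j. 1 \<le> \<tau> \<Longrightarrow> j < N \<Longrightarrow> 0 \<le> g \<tau> j"
  shows "0 \<le> gossip_sum N W g n i"
  unfolding gossip_sum_def using assms
  by (intro sum_nonneg mult_nonneg_nonneg mat_pow_nonneg) auto

lemma dts_q_beta_density:
  assumes W_nonneg: "\<And>i j. i < N \<Longrightarrow> j < N \<Longrightarrow> 0 \<le> W i j"
    and W_row: "\<And>i. i < N \<Longrightarrow> (\<Sum>j<N. W i j) = 1"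
    and "\<eta> \<ge> 0"
    and Y: "\<And>\<tau> j. 1 \<le> \<tau> \<Longrightarrow> j < N \<Longrightarrow> 0 \<le> Y \<tau> j \<and> Y \<tau> j \<le> 1"
    and "i < N" "0 < x" "x < 1"
  shows "dts_q N W A Y \<eta> (beta_density 1 1) n i k x =
         beta_density
           (\<eta> * gossip_sum N W (\<lambda>\<tau> j. Y \<tau> j * of_bool (A \<tau> j = k)) n i + 1)
           (\<eta> * gossip_sum N W (\<lambda>\<tau> j. (1 - Y \<tau> j) * of_bool (A \<tau> j = k)) n i + 1) x"
  using \<open>i < N\<close> \<open>0 < x\<close> \<open>x < 1\<close>
proof (induction n arbitrary: i x)
  case 0
  then show ?case by simp
next
  case (Suc n)
  define gY where "gY = (\<lambda>\<tau> j. Y \<tau> j * of_bool (A \<tau> j = k))"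
  define gN where "gN = (\<lambda>\<tau> j. (1 - Y \<tau> j) * of_bool (A \<tau> j = k))"
  note IH = Suc.IH[folded gY_def gN_def]
  define a where "a j = \<eta> * gossip_sum N W gY n j + 1 + \<eta> * Y (Suc n) j * of_bool (A (Suc n) j = k)" for j
  define b where "b j = \<eta> * gossip_sum N W gN n j + 1 + \<eta> * (1 - Y (Suc n) j) * of_bool (A (Suc n) j = k)" for j
  have acc_pos: "0 < \<eta> * gossip_sum N W gY m j + 1" "0 < \<eta> * gossip_sum N W gN m j + 1" for m j
    using \<open>\<eta> \<ge> 0\<close> Y
      gossip_sum_nonneg[OF W_nonneg, where g = gY] gossip_sum_nonneg[OF W_nonneg, where g = gN]
    by (simp_all add: gY_def gN_def add_nonneg_pos)
  have local_step: "(if A (Suc n) j = k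
        then normalize01 (\<lambda>\<theta>. dts_q N W A Y \<eta> (beta_density 1 1) n j k \<theta> * bern_lik \<theta> (Y (Suc n) j) powr \<eta>)
        else dts_q N W A Y \<eta> (beta_density 1 1) n j k) z = beta_density (a j) (b j) z"
    if "j < N" "0 < z" "z < 1" for j z
    unfolding a_def b_def using that acc_pos Y[of "Suc n" j] \<open>\<eta> \<ge> 0\<close>
    by (intro dts_local_update_beta_density) (simp_all add: IH)
  have ab_pos: "0 < a j" "0 < b j" if "j < N" for j
    using acc_pos[of n j] Y[of "Suc n" j] that \<open>\<eta> \<ge> 0\<close>
    unfolding a_def b_def by (simp_all add: add_pos_nonneg)
  have ab_eq: "a j = \<eta> * (gossip_sum N W gY n j + gY (Suc n) j) + 1"
              "b j = \<eta> * (gossip_sum N W gN n j + gN (Suc n) j) + 1" for j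
    unfolding a_def b_def gY_def gN_def by (simp_all add: algebra_simps)
  have pooled: "(\<Sum>j<N. W i j * a j) = \<eta> * gossip_sum N W gY (Suc n) i + 1"
               "(\<Sum>j<N. W i j * b j) = \<eta> * gossip_sum N W gN (Suc n) i + 1"
    unfolding ab_eq gossip_sum_Suc[OF Suc.prems(1)]
    by (simp_all add: distrib_left sum.distrib sum_distrib_left W_row[OF Suc.prems(1)] algebra_simps)
  show ?case
    unfolding dts_q.simps Let_def gY_def[symmetric] gN_def[symmetric] pooled[symmetric]
    using ab_pos local_step pooled Suc.prems acc_pos[of "Suc n" i]
    by (intro normalize01_geometric_pool_beta_density) (auto simp: W_row)
qed

theorem lemma7:
  fixes N K :: nat and W :: "nat \<Rightarrow> nat \<Rightarrow> real" and \<eta> :: real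
    and A :: "nat \<Rightarrow> nat \<Rightarrow> nat" and Y :: "nat \<Rightarrow> nat \<Rightarrow> real"
    and t i k :: nat and \<theta> :: real
  assumes "N \<ge> 1" and "K \<ge> 1"
    and "gossip_matrix N W"
    and "\<eta> > 0"
    and "\<And>\<tau> j. \<tau> \<ge> 1 \<Longrightarrow> j < N \<Longrightarrow> A \<tau> j < K"
    and "\<And>\<tau> j. \<tau> \<ge> 1 \<Longrightarrow> j < N \<Longrightarrow> Y \<tau> j \<in> {0, 1}"
    and "t \<ge> 1" and "i < N" and "k < K"
    and "0 < \<theta>" and "\<theta> < 1"
  shows "dts_density N W A Y \<eta> (beta_density 1 1) t i k \<theta> =
         beta_density
           (\<eta> * (\<Sum>\<tau>=1..t-1. \<Sum>j<N. mat_pow N W (t - \<tau>) i j * Y \<tau> j * (if A \<tau> j = k then 1 else 0)) + 1)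
           (\<eta> * (\<Sum>\<tau>=1..t-1. \<Sum>j<N. mat_pow N W (t - \<tau>) i j * (1 - Y \<tau> j) * (if A \<tau> j = k then 1 else 0)) + 1)
           \<theta>"
proof -
  obtain n where t: "t = Suc n"
    using \<open>t \<ge> 1\<close> by (cases t) auto
  \<comment> \<open>Only nonnegativity and unit row sums of \<open>W\<close> matter.\<close>
  have W_nonneg: "\<And>i j. i < N \<Longrightarrow> j < N \<Longrightarrow> 0 \<le> W i j"
    and W_row: "\<And>i. i < N \<Longrightarrow> (\<Sum>j<N. W i j) = 1"
    using \<open>gossip_matrix N W\<close> unfolding gossip_matrix_def by blast+
  have Y: "0 \<le> Y \<tau> j \<and> Y \<tau> j \<le> 1" if "1 \<le> \<tau>" "j < N" for \<tau> j
    using assms(6)[OF that] by auto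
  have "dts_density N W A Y \<eta> (beta_density 1 1) t i k \<theta> =
        beta_density
          (\<eta> * gossip_sum N W (\<lambda>\<tau> j. Y \<tau> j * of_bool (A \<tau> j = k)) n i + 1)
          (\<eta> * gossip_sum N W (\<lambda>\<tau> j. (1 - Y \<tau> j) * of_bool (A \<tau> j = k)) n i + 1) \<theta>"
    unfolding dts_density_def t
    using dts_q_beta_density[OF W_nonneg W_row _ Y] assms(4,8,10,11) by simp
  then show ?thesis
    unfolding gossip_sum_def t by (simp add: of_bool_def mult.assoc)
qed

end
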